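(* Let $G$ be a heap and let $G^1=\langle V^1,s^1_1,s^1_2,\mathsf{null},\mathsf{root}\rangle$ and $G^2=\langle V^2,s^2_1,s^2_2,\mathsf{null},\mathsf{root}\rangle$ be orable graphs with $V^1\cap V^2=\{\mathsf{null},\mathsf{root}\}$. Then $G\to G^1+G^2$ if and only if $G\to G^1$ or $G\to G^2$.
   Context: A graph is a tuple $\langle V,s_1,s_2,\mathsf{null},\mathsf{root}\rangle$ with $V$ finite, $\mathsf{root}\neq\mathsf{null}$ in $V$, $s_1,s_2\subseteq V\times V$, and $\langle\mathsf{null},x\rangle\in s_i$ iff $x=\mathsf{null}$. A heap is a graph in which $s_1,s_2$ are total functions and every node other than $\mathsf{null}$ is reachable from $\mathsf{root}$ along $s_1\cup s_2$. A homomorphism $h:G\to G'$ is a map on nodes preserving $s_1$- and $s_2$-edges with $h(x)=\mathsf{root}'$ iff $x=\mathsf{root}$ and $h(x)=\mathsf{null}'$ iff $x=\mathsf{null}$; $G\to G'$ means one exists. A graph is orable if for all nodes $x$: $\langle\mathsf{root},x\rangle\in s_2$ iff $x=\mathsf{null}$. For orable $G^1,G^2$ sharing $\mathsf{null},\mathsf{root}$ with $V^1\cap V^2=\{\mathsf{null},\mathsf{root}\}$, the sum $G^1+G^2=\langle V^1\cup V^2,\ s^1_1\cup s^2_1,\ s^1_2\cup s^2_2,\ \mathsf{null},\mathsf{root}\rangle$. *)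

theory Defs
  imports Main
begin

record 'a graph =
  V :: "'a set"
  s1 :: "('a \<times> 'a) set"
  s2 :: "('a \<times> 'a) set"
  null :: 'a
  root :: 'a

definition is_graph :: "'a graph \<Rightarrow> bool" where
  "is_graph G \<longleftrightarrow> finite (V G) \<and> root G \<in> V G \<and> null G \<in> V G \<and> root G \<noteq> null G
     \<and> s1 G \<subseteq> V G \<times> V G \<and> s2 G \<subseteq> V G \<times> V G
     \<and> (\<forall>x. (null G, x) \<in> s1 G \<longleftrightarrow> x = null G)
     \<and> (\<forall>x. (null G, x) \<in> s2 G \<longleftrightarrow> x = null G)"

definition total_fun_on :: "'a set \<Rightarrow> ('a \<times> 'a) set \<Rightarrow> bool" where
  "total_fun_on A s \<longleftrightarrow> (\<forall>x\<in>A. \<exists>!y. (x, y) \<in> s)"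

definition is_heap :: "'a graph \<Rightarrow> bool" where
  "is_heap G \<longleftrightarrow> is_graph G \<and> total_fun_on (V G) (s1 G) \<and> total_fun_on (V G) (s2 G)
     \<and> (\<forall>x \<in> V G - {null G}. (root G, x) \<in> (s1 G \<union> s2 G)\<^sup>*)"

definition is_hom :: "('a \<Rightarrow> 'b) \<Rightarrow> 'a graph \<Rightarrow> 'b graph \<Rightarrow> bool" where
  "is_hom h G G' \<longleftrightarrow> (\<forall>x\<in>V G. h x \<in> V G')
     \<and> (\<forall>(x, y)\<in>s1 G. (h x, h y) \<in> s1 G')
     \<and> (\<forall>(x, y)\<in>s2 G. (h x, h y) \<in> s2 G')
     \<and> (\<forall>x\<in>V G. h x = root G' \<longleftrightarrow> x = root G)
     \<and> (\<forall>x\<in>V G. h x = null G' \<longleftrightarrow> x = null G)"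

definition hom_exists :: "'a graph \<Rightarrow> 'b graph \<Rightarrow> bool" (infix "\<rightarrow>\<^sub>h" 50) where
  "G \<rightarrow>\<^sub>h G' \<longleftrightarrow> (\<exists>h. is_hom h G G')"

definition orable :: "'a graph \<Rightarrow> bool" where
  "orable G \<longleftrightarrow> (\<forall>x. (root G, x) \<in> s2 G \<longleftrightarrow> x = null G)"

definition graph_sum :: "'a graph \<Rightarrow> 'a graph \<Rightarrow> 'a graph" (infixl "+\<^sub>g" 65) where
  "G1 +\<^sub>g G2 = \<lparr>V = V G1 \<union> V G2, s1 = s1 G1 \<union> s1 G2, s2 = s2 G1 \<union> s2 G2,
                null = null G1, root = root G1\<rparr>"

end

theory Submission
  imports Defs
begin

(* The root of a heap has a single s1-successor z, and its s2-successor is null because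
   G1 + G2 is orable.  A homomorphism into G1 + G2 sends the edge from the root to z into one
   summand, say G1.  Since G1 and G2 share only null and root, every edge leaving a node mapped
   to an inner node of G1 is mapped into G1, so by induction along paths from the root the whole
   heap is mapped into G1. *)

lemma graph_sum_commute:
  assumes "null G1 = null G2" and "root G1 = root G2"
  shows "G1 +\<^sub>g G2 = G2 +\<^sub>g G1"
  using assms unfolding graph_sum_def by auto

lemma is_hom_graph_sum_left:
  assumes "is_hom h G G1"
  shows "is_hom h G (G1 +\<^sub>g G2)"
  using assms unfolding is_hom_def graph_sum_def by auto

lemma orable_graph_sum:
  assumes "orable G1" and "orable G2" and "null G1 = null G2" and "root G1 = root G2"
  shows "orable (G1 +\<^sub>g G2)"
  using assms unfolding orable_def graph_sum_def by auto

lemma orable_if_hom_into_orable: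
  assumes heap: "is_heap G" and hom: "is_hom h G H" and "orable H"
  shows "orable G"
proof -
  have graph: "is_graph G" and total: "total_fun_on (V G) (s2 G)"
    using heap unfolding is_heap_def by auto
  have root_G: "root G \<in> V G" using graph unfolding is_graph_def by auto
  have root_s2_null: "y = null G" if "(root G, y) \<in> s2 G" for y
  proof -
    have "y \<in> V G" using graph that unfolding is_graph_def by auto
    have "h (root G) = root H" using hom root_G unfolding is_hom_def by auto
    then have "(root H, h y) \<in> s2 H" using hom that unfolding is_hom_def by fastforce
    then have "h y = null H" using \<open>orable H\<close> unfolding orable_def by auto
    then show ?thesis using hom \<open>y \<in> V G\<close> unfolding is_hom_def by auto
  qed
  moreover obtain y where "(root G, y) \<in> s2 G"
    using total root_G unfolding total_fun_on_def by blast
  ultimately show ?thesis unfolding orable_def by auto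
qed

locale hom_into_graph_sum_left =
  fixes G :: "'a graph" and G1 G2 :: "'b graph" and h :: "'a \<Rightarrow> 'b" and z :: 'a
  assumes heap: "is_heap G"
    and graph1: "is_graph G1" and graph2: "is_graph G2"
    and orable1: "orable G1" and orable2: "orable G2"
    and null_eq: "null G1 = null G2" and root_eq: "root G1 = root G2"
    and shared: "V G1 \<inter> V G2 \<subseteq> {null G1, root G1}"
    and hom: "is_hom h G (G1 +\<^sub>g G2)"
    and root_succ: "(root G, z) \<in> s1 G" and root_succ_left: "(root G1, h z) \<in> s1 G1"
begin

lemma source_graph:
  "root G \<in> V G" "null G \<in> V G" "s1 G \<subseteq> V G \<times> V G" "s2 G \<subseteq> V G \<times> V G"
  "(null G, y) \<in> s1 G \<longleftrightarrow> y = null G" "(null G, y) \<in> s2 G \<longleftrightarrow> y = null G"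
  using heap unfolding is_heap_def is_graph_def by auto

lemma left_graph:
  "root G1 \<in> V G1" "null G1 \<in> V G1" "s1 G1 \<subseteq> V G1 \<times> V G1" "s2 G1 \<subseteq> V G1 \<times> V G1"
  "(null G1, null G1) \<in> s1 G1" "(null G1, null G1) \<in> s2 G1"
  using graph1 unfolding is_graph_def by auto

lemma hom_sum:
  "(x, y) \<in> s1 G \<Longrightarrow> (h x, h y) \<in> s1 G1 \<union> s1 G2"
  "(x, y) \<in> s2 G \<Longrightarrow> (h x, h y) \<in> s2 G1 \<union> s2 G2"
  "x \<in> V G \<Longrightarrow> h x = root G1 \<longleftrightarrow> x = root G"
  "x \<in> V G \<Longrightarrow> h x = null G1 \<longleftrightarrow> x = null G"
  using hom unfolding is_hom_def graph_sum_def by auto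

lemma h_root: "h (root G) = root G1" and h_null: "h (null G) = null G1"
  using hom_sum(3,4) source_graph(1,2) by auto

lemma source_orable: "orable G"
  using orable_if_hom_into_orable[OF heap hom] orable_graph_sum orable1 orable2 null_eq root_eq
  by blast

lemma inner_edge_left:
  assumes "(h x, h y) \<in> R1 \<union> R2" and "R2 \<subseteq> V G2 \<times> V G2"
    and "x \<in> V G" and "h x \<in> V G1" and "x \<noteq> null G" and "x \<noteq> root G"
  shows "(h x, h y) \<in> R1"
proof -
  have "h x \<notin> V G2" using assms shared hom_sum(3,4) by auto
  then show ?thesis using assms by auto
qed

lemma s1_edge_left:
  assumes "(x, y) \<in> s1 G" and "h x \<in> V G1"
  shows "(h x, h y) \<in> s1 G1"
proof -
  consider "x = null G" | "x = root G" | "x \<noteq> null G" "x \<noteq> root G" by blast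
  then show ?thesis
  proof cases
    case 1
    then show ?thesis using assms source_graph(5) left_graph(5) h_null by auto
  next
    case 2
    then have "y = z"
      using assms root_succ heap source_graph(1) unfolding is_heap_def total_fun_on_def by blast
    then show ?thesis using 2 root_succ_left h_root by auto
  next
    case 3
    have "s1 G2 \<subseteq> V G2 \<times> V G2" using graph2 unfolding is_graph_def by auto
    then show ?thesis using inner_edge_left[OF hom_sum(1)] 3 assms source_graph(3) by blast
  qed
qed

lemma s2_edge_left:
  assumes "(x, y) \<in> s2 G" and "h x \<in> V G1"
  shows "(h x, h y) \<in> s2 G1"
proof -
  consider "x = null G" | "x = root G" | "x \<noteq> null G" "x \<noteq> root G" by blast
  then show ?thesis
  proof cases
    case 1
    then show ?thesis using assms source_graph(6) left_graph(6) h_null by auto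
  next
    case 2
    then have "y = null G" using assms source_orable unfolding orable_def by auto
    then show ?thesis using 2 orable1 h_root h_null unfolding orable_def by auto
  next
    case 3
    have "s2 G2 \<subseteq> V G2 \<times> V G2" using graph2 unfolding is_graph_def by auto
    then show ?thesis using inner_edge_left[OF hom_sum(2)] 3 assms source_graph(4) by blast
  qed
qed

lemma reachable_maps_left:
  assumes "(root G, x) \<in> (s1 G \<union> s2 G)\<^sup>*"
  shows "x \<in> V G \<and> h x \<in> V G1"
  using assms
proof (induction rule: rtrancl_induct)
  case base
  then show ?case using source_graph(1) left_graph(1) h_root by auto
next
  case (step x y)
  then show ?case
    using s1_edge_left s2_edge_left source_graph(3,4) left_graph(3,4) by blast
qed

lemma maps_left:
  assumes "x \<in> V G"
  shows "h x \<in> V G1"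
proof (cases "x = null G")
  case True
  then show ?thesis using left_graph(2) h_null by auto
next
  case False
  then show ?thesis
    using assms heap reachable_maps_left unfolding is_heap_def by blast
qed

lemma is_hom_left: "is_hom h G G1"
proof -
  have "(h x, h y) \<in> s1 G1" if "(x, y) \<in> s1 G" for x y
    using s1_edge_left maps_left that source_graph(3) by blast
  moreover have "(h x, h y) \<in> s2 G1" if "(x, y) \<in> s2 G" for x y
    using s2_edge_left maps_left that source_graph(4) by blast
  ultimately show ?thesis
    unfolding is_hom_def using maps_left hom_sum(3,4) by auto
qed

end

theorem proposition30:
  fixes G :: "'a graph" and G1 G2 :: "'b graph"
  assumes "is_heap G"
    and "is_graph G1" and "is_graph G2"
    and "orable G1" and "orable G2"
    and "null G1 = null G2" and "root G1 = root G2"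
    and "V G1 \<inter> V G2 = {null G1, root G1}"
  shows "G \<rightarrow>\<^sub>h G1 +\<^sub>g G2 \<longleftrightarrow> G \<rightarrow>\<^sub>h G1 \<or> G \<rightarrow>\<^sub>h G2"
proof
  assume "G \<rightarrow>\<^sub>h G1 +\<^sub>g G2"
  then obtain h where hom: "is_hom h G (G1 +\<^sub>g G2)" unfolding hom_exists_def by blast
  then have hom_swap: "is_hom h G (G2 +\<^sub>g G1)" using graph_sum_commute[OF assms(6,7)] by simp
  have root_G: "root G \<in> V G" using \<open>is_heap G\<close> unfolding is_heap_def is_graph_def by blast
  then obtain z where root_succ: "(root G, z) \<in> s1 G"
    using \<open>is_heap G\<close> unfolding is_heap_def total_fun_on_def by blast
  have "h (root G) = root G1" using hom root_G unfolding is_hom_def graph_sum_def by simp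
  then have "(root G1, h z) \<in> s1 G1 \<or> (root G2, h z) \<in> s1 G2"
    using hom root_succ assms(7) unfolding is_hom_def graph_sum_def by fastforce
  then have "is_hom h G G1 \<or> is_hom h G G2"
    using hom_into_graph_sum_left.is_hom_left[of G G1 G2 h z]
      hom_into_graph_sum_left.is_hom_left[of G G2 G1 h z]
      hom hom_swap root_succ assms
    unfolding hom_into_graph_sum_left_def by (metis Int_commute order_refl)
  then show "G \<rightarrow>\<^sub>h G1 \<or> G \<rightarrow>\<^sub>h G2" unfolding hom_exists_def by blast
next
  assume "G \<rightarrow>\<^sub>h G1 \<or> G \<rightarrow>\<^sub>h G2"
  then show "G \<rightarrow>\<^sub>h G1 +\<^sub>g G2"
    using is_hom_graph_sum_left graph_sum_commute[OF assms(6,7)] unfolding hom_exists_def by metis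
qed

end
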